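(* Let $\mathrm{A}$ be any nontrivial system of Bilocal Classical Theory (BCT), and let $\rho=\sum_{i=1}^{D_{\mathrm A}}p_i|i)_{\mathrm A}$ be a deterministic state of $\mathrm A$, where $|1)_{\mathrm A},\dots,|D_{\mathrm A})_{\mathrm A}$ are the pure states of $\mathrm A$ and $\mathbf p=(p_i)_i$ is a probability distribution. Then the information content of $\rho$ is \[ I(\rho)=\frac{H(\mathbf p)+1}{2}, \] where $H(\mathbf p)=-\sum_i p_i\log_2 p_i$ is the Shannon entropy.
   Context: BCT is an operational probabilistic theory with the following structure. Systems: a trivial system $\mathrm I$ (with $\mathrm{AI}=\mathrm{IA}=\mathrm A$) and, for every integer $D>1$, exactly one system of size $D$ (the size $D_{\mathrm A}$ is the dimension of the real span of the states of $\mathrm A$). For a nontrivial system $\mathrm A$, every state is a nonnegative combination $\sum_i p_i|i)_{\mathrm A}$ of the $D_{\mathrm A}$ pure states $|i)_{\mathrm A}$, which are the vertices of the simplex of deterministic states (deterministic iff $\sum_i p_i=1$) and are jointly perfectly discriminable; each system has a unique deterministic effect $e_{\mathrm A}$, with $(e_{\mathrm A}|i)_{\mathrm A}=1$. Composition: for nontrivial $\mathrm A,\mathrm B$, the composite $\mathrm{AB}$ is the system of size $2D_{\mathrm A}D_{\mathrm B}$, with pure states $|(ij)_s)_{\mathrm{AB}}$, $1\le i\le D_{\mathrm A}$, $1\le j\le D_{\mathrm B}$, $s\in\{+,-\}$; parallel composition of pure states is $|i)_{\mathrm A}\boxtimes|j)_{\mathrm B}=\tfrac12\sum_{s=\pm}|(ij)_s)_{\mathrm{AB}}$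 (extended bilinearly), and for three systems $((ij)_{s_1}k)_{s_2}=(i(jk)_{s_1s_2})_{s_1}$, signs multiplying as $\pm1$. Transformations act linearly. Deterministic transformations (channels) $\mathcal C\in\mathsf{Tr}_1(\mathrm E\to\mathrm F)$ between nontrivial systems are exactly those for which, for each $j\in\{1,\dots,D_{\mathrm E}\}$, there is a probability distribution $\{\lambda^{(j)}_{m\tau}\}$ over $(m,\tau)\in\{1,\dots,D_{\mathrm F}\}\times\{+,-\}$ such that for every system $\mathrm A$ and every pure state, $(\mathcal I_{\mathrm A}\boxtimes\mathcal C)|(ij)_s)_{\mathrm{AE}}=\sum_{m,\tau}\lambda^{(j)}_{m\tau}|(im)_{\tau s})_{\mathrm{AF}}$. Multiple copies: $\mathrm A^{\boxtimes N}$ denotes $(\cdots((\mathrm A_1\mathrm A_2)\mathrm A_3)\cdots)\mathrm A_N$ with each $\mathrm A_k$ a copy of $\mathrm A$; its pure states are labelled $|\mathbf i_{\mathbf s})$ with $\mathbf i\in\{1,\dots,D_{\mathrm A}\}^N$, $\mathbf s\in\{+,-\}^{N-1}$, and $\rho^{\boxtimes N}=\sum_{\mathbf i,\mathbf s}p_{i_1}\cdots p_{i_N}2^{-(N-1)}|\mathbf i_{\mathbf s})$. The bibit $\mathrm B$ is the system of size $2$. Information content. A dilation of a state $\sigma$ of a system $\mathrm X$ is a state $\Psi$ of $\mathrm{XE}$ (for some system $\mathrm E$) with $(\mathcal I_{\mathrm X}\boxtimes e_{\mathrm E})\Psi=\sigma$. A refinement of a state $\Psi$ is a finite collection of states $\{\Gamma_i\}$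 belonging to a common preparation test with $\sum_i\Gamma_i=\Psi$. The operational norm of an element $\delta$ of the real span of states is $\|\delta\|_{\rm op}=\sup_{\{a_0,a_1\}}(a_0-a_1|\delta)$ over binary observation tests; in BCT it equals $\sum_k|\delta_k|$ for $\delta=\sum_k\delta_k|k)$ expanded in pure states. For a channel $\mathcal C$ on $\mathrm A^{\boxtimes N}$, $D(\rho^{\boxtimes N},\mathcal C)=\sup_{\Psi}\sup_{\{\Gamma_i\}}\sum_i\|(\mathcal C\boxtimes\mathcal I_{\mathrm E})\Gamma_i-\Gamma_i\|_{\rm op}$, the suprema over all dilations $\Psi$ of $\rho^{\boxtimes N}$ (all ancillas $\mathrm E$) and all refinements $\{\Gamma_i\}$ of $\Psi$. Let $E_{N,M,\varepsilon}(\rho)$ be the set of pairs of channels $\mathcal E\in\mathsf{Tr}_1(\mathrm A^{\boxtimes N}\to\mathrm B^{\boxtimes M})$, $\mathcal D\in\mathsf{Tr}_1(\mathrm B^{\boxtimes M}\to\mathrm A^{\boxtimes N})$ with $D(\rho^{\boxtimes N},\mathcal D\mathcal E)<\varepsilon$; $R_{N,\varepsilon}(\rho)=\min\{M:E_{N,M,\varepsilon}(\rho)\neq\emptyset\}/N$, and $I(\rho)=\lim_{\varepsilon\to0}\limsup_{N\to\infty}R_{N,\varepsilon}(\rho)$. *)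

theory Defs
  imports Complex_Main "HOL-Library.Extended_Real" "HOL-Library.Liminf_Limsup"
begin

text \<open>A nontrivial system is identified with a finite label set of its pure states;
  a (unnormalised) element of the span of states is a real function on labels.
  Signs are booleans: True = +, False = -, and sign product s1*s2 is (s1 = s2).\<close>

type_synonym 'a vec = "'a \<Rightarrow> real"

definition states_on :: "'a set \<Rightarrow> 'a vec set" where
  "states_on L = {v. (\<forall>a. 0 \<le> v a) \<and> (\<forall>a. a \<notin> L \<longrightarrow> v a = 0)}"

definition opnorm :: "'a set \<Rightarrow> 'a vec \<Rightarrow> real" where
  "opnorm L v = (\<Sum>a\<in>L. \<bar>v a\<bar>)"

text \<open>Channels E -> F (label sets L1, L2): for each input pure state x a probability
  distribution lam x y tau over output pure state y and sign tau.\<close>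
definition is_channel :: "'a set \<Rightarrow> 'b set \<Rightarrow> ('a \<Rightarrow> 'b \<Rightarrow> bool \<Rightarrow> real) \<Rightarrow> bool" where
  "is_channel L1 L2 lam \<longleftrightarrow>
     (\<forall>x\<in>L1. (\<forall>y t. 0 \<le> lam x y t) \<and> (\<forall>y t. y \<notin> L2 \<longrightarrow> lam x y t = 0)
              \<and> (\<Sum>y\<in>L2. lam x y True + lam x y False) = 1)
     \<and> (\<forall>x y t. x \<notin> L1 \<longrightarrow> lam x y t = 0)"

definition chan_comp :: "'b set \<Rightarrow> ('a \<Rightarrow> 'b \<Rightarrow> bool \<Rightarrow> real) \<Rightarrow> ('b \<Rightarrow> 'c \<Rightarrow> bool \<Rightarrow> real)
     \<Rightarrow> ('a \<Rightarrow> 'c \<Rightarrow> bool \<Rightarrow> real)" where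
  "chan_comp LY lamE lamD = (\<lambda>x z sg. \<Sum>y\<in>LY. \<Sum>t\<in>UNIV. lamE x y t * lamD y z (t = sg))"

text \<open>Action of a channel on its input system alone (trivial ancilla).\<close>
definition act_triv :: "'a set \<Rightarrow> ('a \<Rightarrow> 'b \<Rightarrow> bool \<Rightarrow> real) \<Rightarrow> 'a vec \<Rightarrow> 'b vec" where
  "act_triv L lam v = (\<lambda>y. \<Sum>x\<in>L. v x * (lam x y True + lam x y False))"

text \<open>Action of C \<boxtimes> I_E on XE, whose pure states are (x, j, s):
  |(x j)_s) is mapped to sum lam x y t |(y j)_{t s}).\<close>
definition act_anc :: "'a set \<Rightarrow> ('a \<Rightarrow> 'b \<Rightarrow> bool \<Rightarrow> real) \<Rightarrow> ('a \<times> nat \<times> bool) vec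
     \<Rightarrow> ('b \<times> nat \<times> bool) vec" where
  "act_anc L lam v = (\<lambda>(y, j, sg). \<Sum>x\<in>L. \<Sum>s\<in>UNIV. v (x, j, s) * lam x y (s = sg))"

definition marg :: "nat \<Rightarrow> ('a \<times> nat \<times> bool) vec \<Rightarrow> 'a vec" where
  "marg d Psi = (\<lambda>x. \<Sum>j<d. \<Sum>s\<in>UNIV. Psi (x, j, s))"

text \<open>D(sigma, C): supremum over dilations (trivial ancilla, or ancilla of any size d \<ge> 2)
  and refinements of the dilation (finite families of states summing to it).\<close>
definition disturbance :: "'a set \<Rightarrow> 'a vec \<Rightarrow> ('a \<Rightarrow> 'a \<Rightarrow> bool \<Rightarrow> real) \<Rightarrow> ereal" where
  "disturbance L sigma lam = Sup
    ({ereal (\<Sum>i\<in>I. opnorm L (\<lambda>x. act_triv L lam (G i) x - G i x)) | I G.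
        finite (I :: nat set) \<and> (\<forall>i\<in>I. G i \<in> states_on L) \<and> (\<forall>x. (\<Sum>i\<in>I. G i x) = sigma x)}
     \<union> {ereal (\<Sum>i\<in>I. opnorm (L \<times> {..<d} \<times> UNIV) (\<lambda>z. act_anc L lam (G i) z - G i z)) | d I G.
        2 \<le> d \<and> finite (I :: nat set) \<and> (\<forall>i\<in>I. G i \<in> states_on (L \<times> {..<d} \<times> UNIV))
        \<and> marg d (\<lambda>z. \<Sum>i\<in>I. G i z) = sigma})"

text \<open>Pure-state labels of A^{\<boxtimes>N} for A of size D: (i_1..i_N, s_1..s_{N-1}).
  The bibit system B^{\<boxtimes>M} is the case D = 2.\<close>
definition copies_labels :: "nat \<Rightarrow> nat \<Rightarrow> (nat list \<times> bool list) set" where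
  "copies_labels D N = {(is, ss). length is = N \<and> (\<forall>i\<in>set is. i < D) \<and> length ss = N - 1}"

definition copies_state :: "nat \<Rightarrow> (nat \<Rightarrow> real) \<Rightarrow> nat \<Rightarrow> (nat list \<times> bool list) vec" where
  "copies_state D p N = (\<lambda>(is, ss). if (is, ss) \<in> copies_labels D N
      then (\<Prod>k<N. p (is ! k)) / 2 ^ (N - 1) else 0)"

definition code_exists :: "nat \<Rightarrow> (nat \<Rightarrow> real) \<Rightarrow> nat \<Rightarrow> nat \<Rightarrow> real \<Rightarrow> bool" where
  "code_exists D p N M eps \<longleftrightarrow>
     (\<exists>lamE lamD. is_channel (copies_labels D N) (copies_labels 2 M) lamE
        \<and> is_channel (copies_labels 2 M) (copies_labels D N) lamD
        \<and> disturbance (copies_labels D N) (copies_state D p N)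
             (chan_comp (copies_labels 2 M) lamE lamD) < ereal eps)"

definition rate :: "nat \<Rightarrow> (nat \<Rightarrow> real) \<Rightarrow> nat \<Rightarrow> real \<Rightarrow> real" where
  "rate D p N eps = real (LEAST M. 1 \<le> M \<and> code_exists D p N M eps) / real N"

definition shannon :: "nat \<Rightarrow> (nat \<Rightarrow> real) \<Rightarrow> real" where
  "shannon D p = - (\<Sum>i<D. p i * log 2 (p i))"

end

theory Submission
  imports Defs
begin

text \<open>A pure state of N copies of A is a word i_1 ... i_N together with N - 1 signs, and the
  N-fold product of rho gives it the weight p(i_1) ... p(i_N) / 2^(N - 1). By Chebyshev's
  inequality the surprisal of the word concentrates at N H(p), so almost all weight sits on about
  2^(N (H + 1)) labels of weight about 2^(-N (H + 1)) each, while M bibits have 2^(2M - 1) labels.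
  Achievability: a deterministic code sending the typical labels injectively into those of the
  bibits and back disturbs every refinement of every dilation by at most twice the atypical weight.
  Converse: refining the state into its pure components shows that a code must return almost all
  weight to the label it came from, but the diagonal of a channel that factors through M bibits
  has total weight at most 2^(2M - 1). Hence 2M is about N (H + 1).\<close>

section \<open>Words and the law of large numbers\<close>

definition words :: "nat \<Rightarrow> nat \<Rightarrow> nat list set" where
  "words D N = {xs. length xs = N \<and> (\<forall>i\<in>set xs. i < D)}"

lemma words_eq_lists: "words D N = {xs. set xs \<subseteq> {..<D} \<and> length xs = N}"
  unfolding words_def by auto

lemma finite_words: "finite (words D N)"
  unfolding words_eq_lists by (rule finite_lists_length_eq) simp

lemma card_words: "card (words D N) = D ^ N"
  unfolding words_eq_lists by (simp add: card_lists_length_eq)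

lemma words_0: "words D 0 = {[]}"
  unfolding words_def by auto

lemma sum_words_Suc:
  "(\<Sum>xs\<in>words D (Suc n). g xs) = (\<Sum>i<D. \<Sum>xs\<in>words D n. g (i # xs))"
proof -
  have "words D (Suc n) = (\<lambda>(i, xs). i # xs) ` ({..<D} \<times> words D n)"
    unfolding words_def by (auto simp: image_def length_Suc_conv)
  then show ?thesis
    by (auto simp: sum.reindex inj_on_def sum.cartesian_product intro!: sum.cong)
qed

definition word_prob :: "(nat \<Rightarrow> real) \<Rightarrow> nat list \<Rightarrow> real" where
  "word_prob p xs = prod_list (map p xs)"

lemma word_prob_Cons [simp]: "word_prob p (i # xs) = p i * word_prob p xs"
  and word_prob_Nil [simp]: "word_prob p [] = 1"
  by (simp_all add: word_prob_def)

lemma word_prob_nonneg: "\<forall>i\<in>set xs. 0 \<le> p i \<Longrightarrow> 0 \<le> word_prob p xs"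
  by (induction xs) auto

context
  fixes D :: nat and p f :: "nat \<Rightarrow> real" and \<mu> \<sigma>2 :: real
  assumes sum_p: "(\<Sum>i<D. p i) = 1"
  defines "\<mu> \<equiv> \<Sum>i<D. p i * f i" and "\<sigma>2 \<equiv> \<Sum>i<D. p i * (f i - \<mu>)\<^sup>2"
begin

lemma sum_word_prob: "(\<Sum>xs\<in>words D n. word_prob p xs) = 1"
  by (induction n) (simp_all add: words_0 sum_words_Suc sum_p flip: sum_distrib_left sum_distrib_right)

lemma sum_word_prob_centered:
  "(\<Sum>xs\<in>words D n. word_prob p xs * (sum_list (map f xs) - n * \<mu>)) = 0"
proof (induction n)
  case (Suc n)
  let ?P = "word_prob p" and ?S = "\<lambda>xs. sum_list (map f xs) - n * \<mu>"
  have "(\<Sum>xs\<in>words D (Suc n). ?P xs * (sum_list (map f xs) - Suc n * \<mu>))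
     = (\<Sum>i<D. \<Sum>xs\<in>words D n. p i * (f i - \<mu>) * ?P xs + p i * (?P xs * ?S xs))"
    by (simp add: sum_words_Suc algebra_simps)
  also have "\<dots> = (\<Sum>i<D. p i * (f i - \<mu>) * (\<Sum>xs\<in>words D n. ?P xs)
                      + p i * (\<Sum>xs\<in>words D n. ?P xs * ?S xs))"
    by (simp add: sum.distrib sum_distrib_left)
  also have "\<dots> = (\<Sum>i<D. p i * f i) - (\<Sum>i<D. p i) * \<mu>"
    using Suc by (simp add: sum_word_prob right_diff_distrib sum_subtractf sum_distrib_right)
  also have "\<dots> = 0"
    by (simp add: \<mu>_def sum_p)
  finally show ?case .
qed (simp add: words_0)

lemma sum_word_prob_centered_sq:
  "(\<Sum>xs\<in>words D n. word_prob p xs * (sum_list (map f xs) - n * \<mu>)\<^sup>2) = n * \<sigma>2"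
proof (induction n)
  case (Suc n)
  let ?P = "word_prob p" and ?S = "\<lambda>xs. sum_list (map f xs) - n * \<mu>"
  have "(\<Sum>xs\<in>words D (Suc n). ?P xs * (sum_list (map f xs) - Suc n * \<mu>)\<^sup>2)
     = (\<Sum>i<D. \<Sum>xs\<in>words D n. p i * (f i - \<mu>)\<^sup>2 * ?P xs
          + 2 * p i * (f i - \<mu>) * (?P xs * ?S xs) + p i * (?P xs * (?S xs)\<^sup>2))"
    by (simp add: sum_words_Suc power2_eq_square algebra_simps)
  also have "\<dots> = (\<Sum>i<D. p i * (f i - \<mu>)\<^sup>2 * (\<Sum>xs\<in>words D n. ?P xs)
          + 2 * p i * (f i - \<mu>) * (\<Sum>xs\<in>words D n. ?P xs * ?S xs)
          + p i * (\<Sum>xs\<in>words D n. ?P xs * (?S xs)\<^sup>2))"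
    by (simp add: sum.distrib sum_distrib_left)
  also have "\<dots> = \<sigma>2 + n * \<sigma>2"
    using Suc by (simp add: sum_word_prob sum_word_prob_centered \<sigma>2_def sum.distrib sum_p
        flip: sum_distrib_right)
  finally show ?case by (simp add: algebra_simps)
qed (simp add: words_0)

lemma word_prob_deviation_le:
  assumes "0 < n" "0 < \<delta>" "\<forall>i<D. 0 \<le> p i"
  shows "(\<Sum>xs | xs \<in> words D n \<and> n * \<delta> \<le> \<bar>sum_list (map f xs) - n * \<mu>\<bar>. word_prob p xs)
    \<le> \<sigma>2 / (n * \<delta>\<^sup>2)"
proof -
  let ?S = "\<lambda>xs. sum_list (map f xs) - n * \<mu>"
  have P_nonneg: "0 \<le> word_prob p xs" if "xs \<in> words D n" for xs
    using that assms(3) by (auto simp: words_def intro!: word_prob_nonneg)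
  have pos: "0 < n * \<delta>" using assms by simp
  have "(\<Sum>xs | xs \<in> words D n \<and> n * \<delta> \<le> \<bar>?S xs\<bar>. word_prob p xs)
     \<le> (\<Sum>xs | xs \<in> words D n \<and> n * \<delta> \<le> \<bar>?S xs\<bar>. word_prob p xs * (?S xs)\<^sup>2 / (n * \<delta>)\<^sup>2)"
  proof (rule sum_mono)
    fix xs assume xs: "xs \<in> {xs. xs \<in> words D n \<and> n * \<delta> \<le> \<bar>?S xs\<bar>}"
    then have "(n * \<delta>)\<^sup>2 \<le> (?S xs)\<^sup>2"
      using pos by (simp flip: abs_le_square_iff)
    then have "1 \<le> (?S xs)\<^sup>2 / (n * \<delta>)\<^sup>2"
      using assms by (simp add: le_divide_eq)
    then show "word_prob p xs \<le> word_prob p xs * (?S xs)\<^sup>2 / (n * \<delta>)\<^sup>2"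
      using mult_left_mono[OF _ P_nonneg] xs by fastforce
  qed
  also have "\<dots> \<le> (\<Sum>xs\<in>words D n. word_prob p xs * (?S xs)\<^sup>2 / (n * \<delta>)\<^sup>2)"
    by (rule sum_mono2) (auto simp: finite_words P_nonneg)
  also have "\<dots> = n * \<sigma>2 / (n * \<delta>)\<^sup>2"
    by (simp add: sum_word_prob_centered_sq flip: sum_divide_distrib)
  also have "\<dots> = \<sigma>2 / (n * \<delta>\<^sup>2)"
    using assms by (simp add: power2_eq_square)
  finally show ?thesis .
qed

end

section \<open>Channels\<close>

lemma sum_UNIV_bool: "(\<Sum>s\<in>UNIV. g s) = g True + g False"
  by (simp add: UNIV_bool add.commute)

lemma sum_triple_product:
  "(\<Sum>z\<in>A \<times> B \<times> C. g z) = (\<Sum>x\<in>A. \<Sum>j\<in>B. \<Sum>s\<in>C. g (x, j, s))"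
  by (simp add: sum.cartesian_product')

lemma channel_nonneg: "is_channel L1 L2 C \<Longrightarrow> 0 \<le> C x y t"
  unfolding is_channel_def by (cases "x \<in> L1") auto

lemma channel_sum: "is_channel L1 L2 C \<Longrightarrow> x \<in> L1 \<Longrightarrow> (\<Sum>y\<in>L2. C x y True + C x y False) = 1"
  unfolding is_channel_def by auto

lemma channel_weight_le_one:
  assumes "finite L2" "is_channel L1 L2 C" "x \<in> L1"
  shows "C x y True + C x y False \<le> 1"
proof (cases "y \<in> L2")
  case True
  have "C x y True + C x y False \<le> (\<Sum>y\<in>L2. C x y True + C x y False)"
    using assms True channel_nonneg[OF assms(2)]
    by (intro member_le_sum[where f = "\<lambda>y. C x y True + C x y False"]) (auto intro: add_nonneg_nonneg)
  then show ?thesis using channel_sum[OF assms(2,3)] by simp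
next
  case False
  then show ?thesis using assms(2,3) unfolding is_channel_def by simp
qed

lemma chan_comp_weight:
  "chan_comp L2 E C x z True + chan_comp L2 E C x z False
     = (\<Sum>y\<in>L2. (E x y True + E x y False) * (C y z True + C y z False))"
  unfolding chan_comp_def by (simp add: sum_UNIV_bool sum.distrib[symmetric] algebra_simps)

lemma is_channel_chan_comp:
  assumes E: "is_channel L1 L2 E" and C: "is_channel L2 L3 C"
  shows "is_channel L1 L3 (chan_comp L2 E C)"
  unfolding is_channel_def
proof (intro conjI ballI allI impI)
  fix x z sg
  show "0 \<le> chan_comp L2 E C x z sg"
    unfolding chan_comp_def using channel_nonneg[OF E] channel_nonneg[OF C]
    by (intro sum_nonneg) (simp add: sum_UNIV_bool)
  show "chan_comp L2 E C x z sg = 0" if "z \<notin> L3"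
    using C that unfolding chan_comp_def is_channel_def by (intro sum.neutral) simp
  show "chan_comp L2 E C x z sg = 0" if "x \<notin> L1"
    using E that unfolding chan_comp_def is_channel_def by simp
next
  fix x assume x: "x \<in> L1"
  have "(\<Sum>z\<in>L3. chan_comp L2 E C x z True + chan_comp L2 E C x z False)
      = (\<Sum>y\<in>L2. (E x y True + E x y False) * (\<Sum>z\<in>L3. C y z True + C y z False))"
    by (simp add: chan_comp_weight sum_distrib_left sum.swap[of _ L3])
  also have "\<dots> = 1"
    using channel_sum[OF C] channel_sum[OF E x] by simp
  finally show "(\<Sum>z\<in>L3. chan_comp L2 E C x z True + chan_comp L2 E C x z False) = 1" .
qed

lemma sum_chan_comp_diag_le_card:
  assumes fin: "finite K" and E: "is_channel L K E" and C: "is_channel K L C"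
  shows "(\<Sum>x\<in>L. chan_comp K E C x x True + chan_comp K E C x x False) \<le> card K"
proof -
  have "(\<Sum>x\<in>L. chan_comp K E C x x True + chan_comp K E C x x False)
      = (\<Sum>x\<in>L. \<Sum>y\<in>K. (E x y True + E x y False) * (C y x True + C y x False))"
    by (simp add: chan_comp_weight)
  also have "\<dots> \<le> (\<Sum>x\<in>L. \<Sum>y\<in>K. C y x True + C y x False)"
    using channel_weight_le_one[OF fin E] channel_nonneg[OF C] channel_nonneg[OF E]
    by (intro sum_mono mult_left_le_one_le) (auto intro: add_nonneg_nonneg)
  also have "\<dots> = (\<Sum>y\<in>K. \<Sum>x\<in>L. C y x True + C y x False)"
    by (rule sum.swap)
  also have "\<dots> = card K"
    using channel_sum[OF C] by simp
  finally show ?thesis .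
qed

definition det_channel :: "'a set \<Rightarrow> ('a \<Rightarrow> 'b) \<Rightarrow> 'a \<Rightarrow> 'b \<Rightarrow> bool \<Rightarrow> real" where
  "det_channel L f = (\<lambda>x y t. if x \<in> L \<and> y = f x \<and> t then 1 else 0)"

lemma is_channel_det_channel:
  assumes "finite L2" "f ` L1 \<subseteq> L2"
  shows "is_channel L1 L2 (det_channel L1 f)"
proof -
  have "(\<Sum>y\<in>L2. det_channel L1 f x y True + det_channel L1 f x y False) = 1" if "x \<in> L1" for x
    using assms that by (simp add: det_channel_def image_subset_iff)
  then show ?thesis
    using assms unfolding is_channel_def by (auto simp: det_channel_def)
qed

lemma chan_comp_det_channel:
  assumes "finite L2" "f ` L1 \<subseteq> L2"
  shows "chan_comp L2 (det_channel L1 f) (det_channel L2 g) = det_channel L1 (g \<circ> f)"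
proof (intro ext)
  fix x z sg
  have "chan_comp L2 (det_channel L1 f) (det_channel L2 g) x z sg
      = (\<Sum>y\<in>L2. if x \<in> L1 \<and> y = f x then det_channel L2 g y z sg else 0)"
    unfolding chan_comp_def by (intro sum.cong refl) (simp add: sum_UNIV_bool det_channel_def[of L1])
  also have "\<dots> = (if x \<in> L1 then det_channel L2 g (f x) z sg else 0)"
    using assms by (auto simp: image_subset_iff)
  also have "\<dots> = det_channel L1 (g \<circ> f) x z sg"
    using assms by (auto simp: det_channel_def image_subset_iff)
  finally show "chan_comp L2 (det_channel L1 f) (det_channel L2 g) x z sg = det_channel L1 (g \<circ> f) x z sg" .
qed

section \<open>Disturbance bounds\<close>

lemma stochastic_deviation_le:
  fixes k :: "'a \<Rightarrow> 'a \<Rightarrow> real"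
  assumes fin: "finite L" and TL: "T \<subseteq> L"
    and k_nonneg: "\<forall>x\<in>L. \<forall>y\<in>L. 0 \<le> k x y" and k_sum: "\<forall>x\<in>L. (\<Sum>y\<in>L. k x y) = 1"
    and k_id: "\<forall>x\<in>T. \<forall>y\<in>L. k x y = (if y = x then 1 else 0)"
    and v_nonneg: "\<forall>x\<in>L. 0 \<le> v x"
  shows "(\<Sum>y\<in>L. \<bar>(\<Sum>x\<in>L. v x * k x y) - v y\<bar>) \<le> 2 * (\<Sum>x\<in>L - T. v x)"
proof -
  define R where "R y = (\<Sum>x\<in>L - T. v x * k x y)" for y
  have R_nonneg: "0 \<le> R y" if "y \<in> L" for y
    unfolding R_def using that k_nonneg v_nonneg by (intro sum_nonneg) auto
  have split: "(\<Sum>x\<in>L. v x * k x y) = (if y \<in> T then v y else 0) + R y" if y: "y \<in> L" for y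
  proof -
    have "(\<Sum>x\<in>L. v x * k x y) = R y + (\<Sum>x\<in>T. v x * k x y)"
      unfolding R_def using sum.subset_diff[OF TL fin] by simp
    also have "(\<Sum>x\<in>T. v x * k x y) = (\<Sum>x\<in>T. if y = x then v x else 0)"
      using k_id y by (intro sum.cong) auto
    also have "\<dots> = (if y \<in> T then v y else 0)"
      using finite_subset[OF TL fin] by simp
    finally show ?thesis by simp
  qed
  have "(\<Sum>y\<in>L. \<bar>(\<Sum>x\<in>L. v x * k x y) - v y\<bar>) \<le> (\<Sum>y\<in>L. R y + (if y \<in> L - T then v y else 0))"
  proof (rule sum_mono)
    fix y assume "y \<in> L"
    then show "\<bar>(\<Sum>x\<in>L. v x * k x y) - v y\<bar> \<le> R y + (if y \<in> L - T then v y else 0)"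
      using split[of y] R_nonneg[of y] v_nonneg by auto
  qed
  also have "\<dots> = (\<Sum>y\<in>L. R y) + (\<Sum>y\<in>L - T. v y)"
    using fin by (simp add: sum.distrib set_diff_eq flip: sum.inter_filter)
  also have "(\<Sum>y\<in>L. R y) = (\<Sum>x\<in>L - T. v x * (\<Sum>y\<in>L. k x y))"
    unfolding R_def by (simp add: sum_distrib_left sum.swap[of _ L])
  also have "\<dots> = (\<Sum>x\<in>L - T. v x)"
    using k_sum by simp
  finally show ?thesis by simp
qed

definition identity_on :: "'a set \<Rightarrow> ('a \<Rightarrow> 'a \<Rightarrow> bool \<Rightarrow> real) \<Rightarrow> bool" where
  "identity_on T C \<longleftrightarrow> (\<forall>x\<in>T. \<forall>z sg. C x z sg = (if z = x \<and> sg then 1 else 0))"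

lemma identity_on_det_channel: "T \<subseteq> L \<Longrightarrow> \<forall>x\<in>T. g x = x \<Longrightarrow> identity_on T (det_channel L g)"
  by (auto simp: identity_on_def det_channel_def)

lemma opnorm_act_triv_le:
  assumes "finite L" "T \<subseteq> L" "is_channel L L C" "identity_on T C" "v \<in> states_on L"
  shows "opnorm L (\<lambda>y. act_triv L C v y - v y) \<le> 2 * (\<Sum>x\<in>L - T. v x)"
  unfolding opnorm_def act_triv_def
  using assms channel_sum[OF assms(3)] channel_nonneg[OF assms(3)]
  by (intro stochastic_deviation_le)
    (auto simp: identity_on_def states_on_def intro: add_nonneg_nonneg)

text \<open>With an ancilla, the channel acts on the labels \<open>(x, j, s)\<close> by a stochastic kernel
  that keeps the ancilla index \<open>j\<close> and multiplies the sign into the output sign.\<close>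

lemma opnorm_act_anc_le:
  assumes fin: "finite L" and TL: "T \<subseteq> L" and C: "is_channel L L C" and id: "identity_on T C"
    and v: "v \<in> states_on (L \<times> {..<d} \<times> UNIV)"
  shows "opnorm (L \<times> {..<d} \<times> UNIV) (\<lambda>z. act_anc L C v z - v z) \<le> 2 * (\<Sum>x\<in>L - T. marg d v x)"
proof -
  let ?LE = "L \<times> {..<d} \<times> (UNIV :: bool set)"
  define k :: "'a \<times> nat \<times> bool \<Rightarrow> 'a \<times> nat \<times> bool \<Rightarrow> real"
    where "k = (\<lambda>(x, j, s) (y, j', sg). if j' = j then C x y (s = sg) else 0)"
  have act: "act_anc L C v z = (\<Sum>w\<in>?LE. v w * k w z)" if "z \<in> ?LE" for z
    using that unfolding act_anc_def k_def
    by (auto simp: sum_triple_product if_distrib sum.If_cases intro!: sum.cong)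
  have "(\<Sum>z\<in>?LE. \<bar>(\<Sum>w\<in>?LE. v w * k w z) - v z\<bar>) \<le> 2 * (\<Sum>w\<in>?LE - T \<times> {..<d} \<times> UNIV. v w)"
  proof (rule stochastic_deviation_le)
    show "\<forall>w\<in>?LE. (\<Sum>z\<in>?LE. k w z) = 1"
    proof
      fix w assume "w \<in> ?LE"
      then obtain x j s where w: "w = (x, j, s)" "x \<in> L" "j < d" by auto
      then have "(\<Sum>z\<in>?LE. k w z) = (\<Sum>y\<in>L. C x y s + C x y (\<not> s))"
        by (simp add: k_def sum_triple_product sum_UNIV_bool if_distrib sum.If_cases)
      also have "\<dots> = 1"
        using channel_sum[OF C w(2)] by (cases s) (simp_all add: add.commute)
      finally show "(\<Sum>z\<in>?LE. k w z) = 1" .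
    qed
  qed (use fin TL C id v in \<open>auto simp: k_def identity_on_def states_on_def channel_nonneg\<close>)
  also have "(\<Sum>w\<in>?LE - T \<times> {..<d} \<times> UNIV. v w) = (\<Sum>x\<in>L - T. marg d v x)"
  proof -
    have "?LE - T \<times> {..<d} \<times> UNIV = (L - T) \<times> {..<d} \<times> UNIV" by auto
    then show ?thesis by (simp add: marg_def sum_triple_product)
  qed
  finally show ?thesis
    unfolding opnorm_def by (simp add: act cong: sum.cong)
qed

lemma marg_sum: "marg d (\<lambda>z. \<Sum>i\<in>I. G i z) x = (\<Sum>i\<in>I. marg d (G i) x)"
  unfolding marg_def by (simp add: sum.swap[of _ I])

lemma disturbance_le_if_identity_on:
  assumes fin: "finite L" and TL: "T \<subseteq> L" and C: "is_channel L L C" and id: "identity_on T C"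
  shows "disturbance L \<sigma> C \<le> ereal (2 * (\<Sum>x\<in>L - T. \<sigma> x))"
  unfolding disturbance_def
proof (rule Sup_least, elim UnE CollectE exE conjE)
  fix a and I :: "nat set" and G
  assume a: "a = ereal (\<Sum>i\<in>I. opnorm L (\<lambda>x. act_triv L C (G i) x - G i x))"
    and "finite I" and G: "\<forall>i\<in>I. G i \<in> states_on L" and refines: "\<forall>x. (\<Sum>i\<in>I. G i x) = \<sigma> x"
  have "(\<Sum>i\<in>I. opnorm L (\<lambda>x. act_triv L C (G i) x - G i x)) \<le> (\<Sum>i\<in>I. 2 * (\<Sum>x\<in>L - T. G i x))"
    using opnorm_act_triv_le[OF fin TL C id] G by (intro sum_mono) auto
  also have "\<dots> = 2 * (\<Sum>x\<in>L - T. \<Sum>i\<in>I. G i x)"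
    by (simp add: sum_distrib_left[symmetric]) (rule sum.swap)
  also have "\<dots> = 2 * (\<Sum>x\<in>L - T. \<sigma> x)"
    using refines by simp
  finally show "a \<le> ereal (2 * (\<Sum>x\<in>L - T. \<sigma> x))"
    using a by simp
next
  fix a d and I :: "nat set" and G
  assume a: "a = ereal (\<Sum>i\<in>I. opnorm (L \<times> {..<d} \<times> UNIV) (\<lambda>z. act_anc L C (G i) z - G i z))"
    and "2 \<le> d" and "finite I" and G: "\<forall>i\<in>I. G i \<in> states_on (L \<times> {..<d} \<times> UNIV)"
    and refines: "marg d (\<lambda>z. \<Sum>i\<in>I. G i z) = \<sigma>"
  have "(\<Sum>i\<in>I. opnorm (L \<times> {..<d} \<times> UNIV) (\<lambda>z. act_anc L C (G i) z - G i z))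
      \<le> (\<Sum>i\<in>I. 2 * (\<Sum>x\<in>L - T. marg d (G i) x))"
    using opnorm_act_anc_le[OF fin TL C id] G by (intro sum_mono) auto
  also have "\<dots> = 2 * (\<Sum>x\<in>L - T. \<Sum>i\<in>I. marg d (G i) x)"
    by (simp add: sum_distrib_left[symmetric]) (rule sum.swap)
  also have "\<dots> = 2 * (\<Sum>x\<in>L - T. \<sigma> x)"
    using refines by (simp flip: marg_sum)
  finally show "a \<le> ereal (2 * (\<Sum>x\<in>L - T. \<sigma> x))"
    using a by simp
qed

lemma opnorm_act_triv_point_ge:
  assumes "finite L" "x \<in> L" "0 \<le> a"
  shows "a * (1 - (C x x True + C x x False))
    \<le> opnorm L (\<lambda>y. act_triv L C (\<lambda>z. if z = x then a else 0) y - (if y = x then a else 0))"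
proof -
  have "act_triv L C (\<lambda>z. if z = x then a else 0) y = a * (C x y True + C x y False)" for y
  proof -
    have "act_triv L C (\<lambda>z. if z = x then a else 0) y
        = (\<Sum>z\<in>L. if z = x then a * (C x y True + C x y False) else 0)"
      unfolding act_triv_def by (intro sum.cong) auto
    then show ?thesis using assms by simp
  qed
  then have "a * (1 - (C x x True + C x x False))
      \<le> \<bar>act_triv L C (\<lambda>z. if z = x then a else 0) x - (if x = x then a else 0)\<bar>"
    by (simp add: algebra_simps)
  also have "\<dots> \<le> opnorm L (\<lambda>y. act_triv L C (\<lambda>z. if z = x then a else 0) y - (if y = x then a else 0))"
    unfolding opnorm_def using assms by (intro member_le_sum) auto
  finally show ?thesis .
qed

text \<open>The refinement of \<open>\<sigma>\<close> into its pure components witnesses the bound.\<close>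

lemma diagonal_defect_le_disturbance:
  assumes fin: "finite L" and \<sigma>: "\<sigma> \<in> states_on L"
  shows "ereal (\<Sum>x\<in>L. \<sigma> x * (1 - (C x x True + C x x False))) \<le> disturbance L \<sigma> C"
proof -
  obtain h where h: "bij_betw h {0..<card L} L"
    using ex_bij_betw_nat_finite[OF fin] by blast
  have hL: "h i \<in> L" if "i \<in> {0..<card L}" for i
    using h that bij_betwE by blast
  define G where "G i = (\<lambda>z. if z = h i then \<sigma> (h i) else 0)" for i
  have \<sigma>_nonneg: "0 \<le> \<sigma> x" and \<sigma>_out: "x \<notin> L \<Longrightarrow> \<sigma> x = 0" for x
    using \<sigma> by (auto simp: states_on_def)
  have G_states: "\<forall>i\<in>{0..<card L}. G i \<in> states_on L"
    using hL \<sigma>_nonneg unfolding G_def states_on_def by auto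
  have G_refines: "\<forall>x. (\<Sum>i\<in>{0..<card L}. G i x) = \<sigma> x"
  proof
    fix x
    have "(\<Sum>i\<in>{0..<card L}. G i x) = (\<Sum>i\<in>{0..<card L}. (\<lambda>y. if y = x then \<sigma> y else 0) (h i))"
      unfolding G_def by (intro sum.cong) auto
    also have "\<dots> = (\<Sum>y\<in>L. if y = x then \<sigma> y else 0)"
      by (rule sum.reindex_bij_betw[OF h])
    also have "\<dots> = \<sigma> x"
      using fin \<sigma>_out by auto
    finally show "(\<Sum>i\<in>{0..<card L}. G i x) = \<sigma> x" .
  qed
  have "(\<Sum>x\<in>L. \<sigma> x * (1 - (C x x True + C x x False)))
      = (\<Sum>i\<in>{0..<card L}. \<sigma> (h i) * (1 - (C (h i) (h i) True + C (h i) (h i) False)))"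
    by (rule sum.reindex_bij_betw[OF h, symmetric])
  also have "\<dots> \<le> (\<Sum>i\<in>{0..<card L}. opnorm L (\<lambda>x. act_triv L C (G i) x - G i x))"
    unfolding G_def by (intro sum_mono opnorm_act_triv_point_ge fin hL \<sigma>_nonneg)
  finally have "ereal (\<Sum>x\<in>L. \<sigma> x * (1 - (C x x True + C x x False)))
      \<le> ereal (\<Sum>i\<in>{0..<card L}. opnorm L (\<lambda>x. act_triv L C (G i) x - G i x))"
    by simp
  also have "\<dots> \<le> disturbance L \<sigma> C"
    unfolding disturbance_def
    by (intro Sup_upper UnI1 CollectI exI[where x = "{0..<card L}"] exI[where x = G] conjI refl
        finite_atLeastLessThan G_states G_refines)
  finally show ?thesis .
qed

section \<open>Copies of a state and typical labels\<close>

lemma card_bool_lists: "card {ss :: bool list. length ss = n} = 2 ^ n"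
  using card_lists_length_eq[of "UNIV :: bool set"] by simp

lemma copies_labels_eq: "copies_labels D N = words D N \<times> {ss. length ss = N - 1}"
  unfolding copies_labels_def words_def by auto

lemma finite_copies_labels: "finite (copies_labels D N)"
proof -
  have "finite {ss :: bool list. length ss = N - 1}"
    using finite_lists_length_eq[of "UNIV :: bool set"] by simp
  then show ?thesis by (simp add: copies_labels_eq finite_words)
qed

lemma card_copies_labels: "card (copies_labels D N) = D ^ N * 2 ^ (N - 1)"
  by (simp add: copies_labels_eq card_cartesian_product card_words card_bool_lists)

lemma card_copies_labels_bibit:
  assumes "1 \<le> M"
  shows "real (card (copies_labels 2 M)) = 2 powr (2 * real M - 1)"
proof -
  have "card (copies_labels 2 M) = (2::nat) ^ (2 * M - 1)"
    using assms by (simp add: card_copies_labels flip: power_add)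
  moreover have "real (2 * M - 1) = 2 * real M - 1"
    using assms by simp
  ultimately show ?thesis
    by (metis of_nat_numeral of_nat_power powr_realpow zero_less_numeral)
qed

lemma copies_state_eq:
  "copies_state D p N (xs, ss) = (if (xs, ss) \<in> copies_labels D N then word_prob p xs / 2 ^ (N - 1) else 0)"
proof -
  have "(\<Prod>k<N. p (xs ! k)) = word_prob p xs" if "length xs = N"
    using that by (simp add: word_prob_def prod.list_conv_set_nth atLeast0LessThan)
  then show ?thesis
    unfolding copies_state_def by (auto simp: copies_labels_def)
qed

lemma copies_state_in_states_on:
  assumes "\<forall>i<D. 0 \<le> p i"
  shows "copies_state D p N \<in> states_on (copies_labels D N)"
  unfolding states_on_def
  using assms by (auto simp: copies_state_eq copies_labels_def intro!: divide_nonneg_nonneg word_prob_nonneg)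

lemma sum_copies_state_if:
  "(\<Sum>x\<in>copies_labels D N. if Q (fst x) then copies_state D p N x else 0)
    = (\<Sum>xs | xs \<in> words D N \<and> Q xs. word_prob p xs)"
proof -
  have "(\<Sum>x\<in>copies_labels D N. if Q (fst x) then copies_state D p N x else 0)
      = (\<Sum>xs\<in>words D N. \<Sum>ss\<in>{ss :: bool list. length ss = N - 1}. if Q xs then copies_state D p N (xs, ss) else 0)"
    by (simp add: copies_labels_eq sum.cartesian_product')
  also have "\<dots> = (\<Sum>xs\<in>words D N. \<Sum>ss\<in>{ss :: bool list. length ss = N - 1}. if Q xs then word_prob p xs / 2 ^ (N - 1) else 0)"
    by (intro sum.cong refl) (simp add: copies_state_eq copies_labels_eq)
  also have "\<dots> = (\<Sum>xs\<in>words D N. if Q xs then word_prob p xs else 0)"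
    by (intro sum.cong refl) (simp add: card_bool_lists)
  also have "\<dots> = (\<Sum>xs | xs \<in> words D N \<and> Q xs. word_prob p xs)"
    by (simp add: sum.inter_filter finite_words)
  finally show ?thesis .
qed

lemma sum_copies_state:
  assumes "(\<Sum>i<D. p i) = 1"
  shows "(\<Sum>x\<in>copies_labels D N. copies_state D p N x) = 1"
  using sum_copies_state_if[where Q = "\<lambda>_. True"] sum_word_prob[OF assms] by simp

definition surprisal :: "(nat \<Rightarrow> real) \<Rightarrow> nat list \<Rightarrow> real" where
  "surprisal p xs = sum_list (map (\<lambda>i. - log 2 (p i)) xs)"

definition varentropy :: "nat \<Rightarrow> (nat \<Rightarrow> real) \<Rightarrow> real" where
  "varentropy D p = (\<Sum>i<D. p i * (- log 2 (p i) - shannon D p)\<^sup>2)"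

lemma shannon_eq_expected_surprisal: "shannon D p = (\<Sum>i<D. p i * - log 2 (p i))"
  unfolding shannon_def by (simp add: sum_negf)

lemma shannon_nonneg:
  assumes "\<forall>i<D. 0 \<le> p i" "(\<Sum>i<D. p i) = 1"
  shows "0 \<le> shannon D p"
proof -
  have "p i * log 2 (p i) \<le> 0" if i: "i < D" for i
  proof (cases "p i = 0")
    case False
    have "p i \<le> (\<Sum>j<D. p j)"
      using assms(1) i by (intro member_le_sum) auto
    moreover have "0 < p i"
      using assms(1) i False by (simp add: order_le_neq_trans)
    ultimately have "log 2 (p i) \<le> 0"
      using assms(2) by simp
    then show ?thesis
      using assms(1) i by (simp add: mult_nonneg_nonpos)
  qed simp
  then have "(\<Sum>i<D. p i * log 2 (p i)) \<le> 0"
    by (intro sum_nonpos) simp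
  then show ?thesis
    unfolding shannon_def by simp
qed

lemma word_prob_eq_powr_surprisal:
  assumes "0 < word_prob p xs" "\<forall>i\<in>set xs. 0 \<le> p i"
  shows "word_prob p xs = 2 powr (- surprisal p xs)"
  using assms
proof (induction xs)
  case (Cons i xs)
  have "0 < p i" and "0 < word_prob p xs"
    using Cons.prems by (auto simp: zero_less_mult_iff word_prob_nonneg order_less_le)
  then show ?case
    using Cons by (simp add: surprisal_def powr_diff powr_minus divide_inverse)
qed (simp add: surprisal_def)

lemma copies_state_eq_powr_surprisal:
  assumes "\<forall>i<D. 0 \<le> p i" "x \<in> copies_labels D N" "0 < word_prob p (fst x)" "1 \<le> N"
  shows "copies_state D p N x = 2 powr (- surprisal p (fst x) - (real N - 1))"
proof -
  obtain xs ss where x: "x = (xs, ss)" by force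
  have "\<forall>i\<in>set xs. 0 \<le> p i"
    using assms(1,2) x by (auto simp: copies_labels_def)
  then have prob: "word_prob p xs = 2 powr (- surprisal p xs)"
    using assms(3) x word_prob_eq_powr_surprisal by simp
  have pow: "(2::real) ^ (N - 1) = 2 powr (real N - 1)"
    using assms(4) by (simp add: powr_realpow[symmetric])
  have "copies_state D p N x = word_prob p xs / 2 ^ (N - 1)"
    using assms(2) x by (simp add: copies_state_eq)
  then show ?thesis
    unfolding prob pow x by (simp only: fst_conv powr_diff)
qed

lemma atypical_mass_le:
  assumes "\<forall>i<D. 0 \<le> p i" "(\<Sum>i<D. p i) = 1" "0 < N" "0 < \<delta>"
  shows "(\<Sum>xs | xs \<in> words D N \<and> N * \<delta> \<le> \<bar>surprisal p xs - N * shannon D p\<bar>. word_prob p xs)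
    \<le> varentropy D p / (N * \<delta>\<^sup>2)"
  using word_prob_deviation_le[OF assms(2), of N \<delta> "\<lambda>i. - log 2 (p i)"] assms
  by (simp add: surprisal_def varentropy_def shannon_eq_expected_surprisal)

section \<open>Coding theorems\<close>

lemma code_mass_bound:
  fixes \<sigma> :: "'a \<Rightarrow> real" and eps \<theta> :: real
  assumes finL: "finite L" and finK: "finite K"
    and E: "is_channel L K E" and C: "is_channel K L C"
    and \<sigma>: "\<sigma> \<in> states_on L" and \<sigma>_sum: "(\<Sum>x\<in>L. \<sigma> x) = 1"
    and dist: "disturbance L \<sigma> (chan_comp K E C) < ereal eps" and \<theta>: "0 \<le> \<theta>"
  shows "1 - eps < \<theta> * card K + (\<Sum>x | x \<in> L \<and> \<theta> < \<sigma> x. \<sigma> x)"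
proof -
  define c where "c x = chan_comp K E C x x True + chan_comp K E C x x False" for x
  have EC: "is_channel L L (chan_comp K E C)"
    by (rule is_channel_chan_comp[OF E C])
  have c_nonneg: "0 \<le> c x" for x
    using channel_nonneg[OF EC] by (simp add: c_def)
  have c_le_one: "c x \<le> 1" if "x \<in> L" for x
    using channel_weight_le_one[OF finL EC that] by (simp add: c_def)
  have \<sigma>_nonneg: "0 \<le> \<sigma> x" for x
    using \<sigma> by (simp add: states_on_def)
  have "ereal (\<Sum>x\<in>L. \<sigma> x * (1 - c x)) < ereal eps"
    using le_less_trans[OF diagonal_defect_le_disturbance[OF finL \<sigma>] dist] by (simp add: c_def)
  then have "1 - eps < (\<Sum>x\<in>L. \<sigma> x * c x)"
    using \<sigma>_sum by (simp add: algebra_simps sum_subtractf)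
  also have "\<dots> \<le> (\<Sum>x\<in>L. \<theta> * c x + (if \<theta> < \<sigma> x then \<sigma> x else 0))"
  proof (rule sum_mono)
    fix x assume x: "x \<in> L"
    show "\<sigma> x * c x \<le> \<theta> * c x + (if \<theta> < \<sigma> x then \<sigma> x else 0)"
    proof (cases "\<theta> < \<sigma> x")
      case True
      then show ?thesis
        using mult_left_le[OF c_le_one[OF x] \<sigma>_nonneg[of x]] \<theta> c_nonneg[of x]
        by (simp add: add_increasing)
    next
      case False
      then show ?thesis
        using mult_right_mono[of "\<sigma> x" \<theta> "c x"] c_nonneg[of x] by simp
    qed
  qed
  also have "\<dots> = \<theta> * (\<Sum>x\<in>L. c x) + (\<Sum>x | x \<in> L \<and> \<theta> < \<sigma> x. \<sigma> x)"
    using finL by (simp add: sum.distrib sum_distrib_left sum.inter_filter)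
  also have "\<dots> \<le> \<theta> * card K + (\<Sum>x | x \<in> L \<and> \<theta> < \<sigma> x. \<sigma> x)"
    using sum_chan_comp_diag_le_card[OF finK E C] \<theta>
    unfolding c_def by (intro add_right_mono mult_left_mono)
  finally show ?thesis .
qed

lemma exists_encoder_decoder:
  assumes "finite T" "finite K" "card T \<le> card K" "T \<subseteq> L" "x0 \<in> L" "y0 \<in> K"
  shows "\<exists>enc dec. enc ` L \<subseteq> K \<and> dec ` K \<subseteq> L \<and> (\<forall>x\<in>T. dec (enc x) = x)"
proof -
  obtain f where f: "f ` T \<subseteq> K" "inj_on f T"
    using card_le_inj[OF assms(1-3)] by blast
  define enc where "enc x = (if x \<in> T then f x else y0)" for x
  define dec where "dec y = (if y \<in> f ` T then inv_into T f y else x0)" for y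
  have "enc ` L \<subseteq> K"
    using f assms(6) by (auto simp: enc_def)
  moreover have "dec ` K \<subseteq> L"
    using assms(4,5) by (auto simp: dec_def inv_into_into)
  moreover have "\<forall>x\<in>T. dec (enc x) = x"
    using f by (simp add: enc_def dec_def)
  ultimately show ?thesis
    by blast
qed

lemma code_exists_if_card_le:
  assumes "0 < D" and T: "T \<subseteq> copies_labels D N" and card: "card T \<le> card (copies_labels 2 M)"
    and mass: "2 * (\<Sum>x\<in>copies_labels D N - T. copies_state D p N x) < eps"
  shows "code_exists D p N M eps"
proof -
  let ?L = "copies_labels D N" and ?K = "copies_labels 2 M" and ?\<sigma> = "copies_state D p N"
  have x0: "(replicate N 0, replicate (N - 1) True) \<in> ?L"
    using assms(1) by (simp add: copies_labels_def)
  have y0: "(replicate M 0, replicate (M - 1) True) \<in> ?K"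
    by (simp add: copies_labels_def)
  obtain enc dec where enc: "enc ` ?L \<subseteq> ?K" and dec: "dec ` ?K \<subseteq> ?L"
    and inverse: "\<forall>x\<in>T. dec (enc x) = x"
    using exists_encoder_decoder[OF finite_subset[OF T finite_copies_labels] finite_copies_labels
        card T x0 y0]
    by blast
  define E where "E = det_channel ?L enc"
  define C where "C = det_channel ?K dec"
  have E_channel: "is_channel ?L ?K E" and C_channel: "is_channel ?K ?L C"
    unfolding E_def C_def using enc dec finite_copies_labels by (simp_all add: is_channel_det_channel)
  have "identity_on T (chan_comp ?K E C)"
    unfolding E_def C_def using enc inverse T
    by (simp add: chan_comp_det_channel finite_copies_labels identity_on_det_channel)
  then have "disturbance ?L ?\<sigma> (chan_comp ?K E C) \<le> ereal (2 * (\<Sum>x\<in>?L - T. ?\<sigma> x))"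
    using finite_copies_labels T is_channel_chan_comp[OF E_channel C_channel]
    by (intro disturbance_le_if_identity_on)
  also have "\<dots> < ereal eps"
    using mass by simp
  finally have "disturbance ?L ?\<sigma> (chan_comp ?K E C) < ereal eps" .
  then show ?thesis
    unfolding code_exists_def by (intro exI[of _ E] exI[of _ C] conjI E_channel C_channel)
qed

context
  fixes D :: nat and p :: "nat \<Rightarrow> real"
  assumes p_nonneg: "\<forall>i<D. 0 \<le> p i" and p_sum: "(\<Sum>i<D. p i) = 1"
begin

lemma copies_state_mass_le_varentropy:
  assumes "0 < N" "0 < \<delta>" "A \<subseteq> copies_labels D N"
    and atypical: "\<forall>x\<in>A. 0 < word_prob p (fst x)
      \<longrightarrow> N * \<delta> \<le> \<bar>surprisal p (fst x) - N * shannon D p\<bar>"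
  shows "(\<Sum>x\<in>A. copies_state D p N x) \<le> varentropy D p / (N * \<delta>\<^sup>2)"
proof -
  let ?L = "copies_labels D N" and ?\<sigma> = "copies_state D p N"
  let ?Q = "\<lambda>xs. N * \<delta> \<le> \<bar>surprisal p xs - N * shannon D p\<bar>"
  have \<sigma>_nonneg: "0 \<le> ?\<sigma> x" for x
    using copies_state_in_states_on[OF p_nonneg, of N] unfolding states_on_def by blast
  have \<sigma>_zero: "?\<sigma> x = 0" if "x \<in> ?L" "\<not> 0 < word_prob p (fst x)" for x
  proof -
    have "0 \<le> word_prob p (fst x)"
      using that(1) p_nonneg by (auto simp: copies_labels_def intro!: word_prob_nonneg)
    then show ?thesis
      using that by (cases x) (simp add: copies_state_eq)
  qed
  have "(\<Sum>x\<in>A. ?\<sigma> x) = (\<Sum>x\<in>?L. if x \<in> A then ?\<sigma> x else 0)"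
    using assms(3) finite_copies_labels by (simp add: sum.inter_restrict[symmetric] Int_absorb1)
  also have "\<dots> \<le> (\<Sum>x\<in>?L. if ?Q (fst x) then ?\<sigma> x else 0)"
    using atypical \<sigma>_nonneg \<sigma>_zero by (intro sum_mono) auto
  also have "\<dots> = (\<Sum>xs | xs \<in> words D N \<and> ?Q xs. word_prob p xs)"
    by (rule sum_copies_state_if)
  also have "\<dots> \<le> varentropy D p / (N * \<delta>\<^sup>2)"
    by (rule atypical_mass_le[OF p_nonneg p_sum assms(1,2)])
  finally show ?thesis .
qed

text \<open>Converse: a code must be able to distinguish, through its \<open>2 ^ (2 * M - 1)\<close> output
  labels, the labels of weight above \<open>\<theta>\<close>, which carry almost all of the mass.\<close>

lemma code_exists_imp_length_gt:
  assumes N: "1 \<le> N" and M: "1 \<le> M" and \<delta>: "0 < \<delta>" and eps: "eps \<le> 1 / 2"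
    and small: "varentropy D p / (N * \<delta>\<^sup>2) \<le> 1 / 4" and code: "code_exists D p N M eps"
  shows "N * (shannon D p + 1 - \<delta>) - 2 < 2 * real M"
proof -
  let ?L = "copies_labels D N" and ?K = "copies_labels 2 M" and ?\<sigma> = "copies_state D p N"
  let ?H = "shannon D p"
  obtain E C where E: "is_channel ?L ?K E" and C: "is_channel ?K ?L C"
    and dist: "disturbance ?L ?\<sigma> (chan_comp ?K E C) < ereal eps"
    using code unfolding code_exists_def by blast
  define \<theta> :: real where "\<theta> = 2 powr (- (N * (?H - \<delta>)) - (real N - 1))"
  have heavy_atypical: "N * \<delta> \<le> \<bar>surprisal p (fst x) - N * ?H\<bar>"
    if x: "x \<in> {x. x \<in> ?L \<and> \<theta> < ?\<sigma> x}" and pos: "0 < word_prob p (fst x)" for x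
  proof -
    have "2 powr (- (N * (?H - \<delta>)) - (real N - 1)) < 2 powr (- surprisal p (fst x) - (real N - 1))"
      using x copies_state_eq_powr_surprisal[OF p_nonneg _ pos N] by (simp add: \<theta>_def)
    then show ?thesis
      by (simp add: algebra_simps)
  qed
  have "1 - eps < \<theta> * card ?K + (\<Sum>x | x \<in> ?L \<and> \<theta> < ?\<sigma> x. ?\<sigma> x)"
    by (rule code_mass_bound[OF finite_copies_labels finite_copies_labels E C
          copies_state_in_states_on[OF p_nonneg] sum_copies_state[OF p_sum] dist])
      (simp add: \<theta>_def)
  also have "(\<Sum>x | x \<in> ?L \<and> \<theta> < ?\<sigma> x. ?\<sigma> x) \<le> varentropy D p / (N * \<delta>\<^sup>2)"
    using N \<delta> heavy_atypical by (intro copies_state_mass_le_varentropy) auto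
  finally have "1 / 4 < \<theta> * card ?K"
    using eps small by linarith
  then have "2 powr (-2) < \<theta> * card ?K"
    by (simp add: powr_minus_divide)
  also have "\<theta> * card ?K = 2 powr (- (N * (?H - \<delta>)) - (real N - 1) + (2 * real M - 1))"
    by (simp only: \<theta>_def card_copies_labels_bibit[OF M] powr_add)
  finally show ?thesis
    by (simp add: algebra_simps)
qed

lemma card_typical_labels_le:
  assumes N: "1 \<le> N"
  shows "real (card {x \<in> copies_labels D N. 0 < word_prob p (fst x) \<and> surprisal p (fst x) \<le> t})
    \<le> 2 powr (t + (real N - 1))"
proof -
  let ?L = "copies_labels D N" and ?\<sigma> = "copies_state D p N"
  define T where "T = {x \<in> ?L. 0 < word_prob p (fst x) \<and> surprisal p (fst x) \<le> t}"
  define m :: real where "m = 2 powr (- t - (real N - 1))"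
  have "m \<le> ?\<sigma> x" if "x \<in> T" for x
  proof -
    have x: "x \<in> ?L" "0 < word_prob p (fst x)" "surprisal p (fst x) \<le> t"
      using that by (auto simp: T_def)
    then show ?thesis
      unfolding m_def copies_state_eq_powr_surprisal[OF p_nonneg x(1,2) N] by simp
  qed
  then have "real (card T) * m \<le> (\<Sum>x\<in>T. ?\<sigma> x)"
    using sum_mono[of T "\<lambda>_. m" ?\<sigma>] by simp
  also have "\<dots> \<le> (\<Sum>x\<in>?L. ?\<sigma> x)"
    using finite_copies_labels copies_state_in_states_on[OF p_nonneg]
    by (intro sum_mono2) (auto simp: T_def states_on_def)
  also have "\<dots> = m * 2 powr (t + (real N - 1))"
    unfolding sum_copies_state[OF p_sum] m_def by (simp flip: powr_add)
  finally show ?thesis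
    by (simp add: T_def m_def mult.commute[of _ m])
qed

lemma code_exists_if_length_ge:
  assumes N: "1 \<le> N" and \<delta>: "0 < \<delta>" and eps: "0 < eps"
    and small: "varentropy D p / (N * \<delta>\<^sup>2) \<le> eps / 4"
    and length: "N * (shannon D p + 1 + \<delta>) \<le> 2 * real M"
  shows "code_exists D p N M eps"
proof -
  let ?L = "copies_labels D N" and ?K = "copies_labels 2 M" and ?\<sigma> = "copies_state D p N"
  let ?H = "shannon D p"
  define T where "T = {x \<in> ?L. 0 < word_prob p (fst x) \<and> surprisal p (fst x) \<le> N * (?H + \<delta>)}"
  have TL: "T \<subseteq> ?L"
    unfolding T_def by blast
  have D: "0 < D"
    using p_sum by (cases D) auto
  have M: "1 \<le> M"
  proof -
    have "0 < real N * (?H + 1 + \<delta>)"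
      using N \<delta> shannon_nonneg[OF p_nonneg p_sum] by (intro mult_pos_pos) auto
    then show ?thesis
      using length by linarith
  qed
  have "real (card T) \<le> 2 powr (N * (?H + \<delta>) + (real N - 1))"
    unfolding T_def by (rule card_typical_labels_le[OF N])
  also have "\<dots> \<le> 2 powr (2 * real M - 1)"
    using length by (simp add: algebra_simps)
  also have "\<dots> = real (card ?K)"
    by (rule card_copies_labels_bibit[OF M, symmetric])
  finally have card: "card T \<le> card ?K"
    by simp
  have "N * \<delta> \<le> \<bar>surprisal p (fst x) - N * ?H\<bar>"
    if "x \<in> ?L - T" "0 < word_prob p (fst x)" for x
  proof -
    have "N * (?H + \<delta>) < surprisal p (fst x)"
      using that by (auto simp: T_def)
    then show ?thesis
      by (simp add: algebra_simps)
  qed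
  then have "(\<Sum>x\<in>?L - T. ?\<sigma> x) \<le> varentropy D p / (N * \<delta>\<^sup>2)"
    using N \<delta> by (intro copies_state_mass_le_varentropy) auto
  then have "2 * (\<Sum>x\<in>?L - T. ?\<sigma> x) < eps"
    using small eps by linarith
  then show ?thesis
    by (rule code_exists_if_card_le[OF D TL card])
qed

lemma rate_near_entropy:
  assumes N: "1 \<le> N" and \<delta>: "0 < \<delta>" and eps: "0 < eps" "eps \<le> 1 / 2"
    and small: "varentropy D p / (N * \<delta>\<^sup>2) \<le> eps / 4"
  shows "\<bar>rate D p N eps - (shannon D p + 1) / 2\<bar> \<le> \<delta> / 2 + 1 / N"
proof -
  let ?H = "shannon D p"
  define M0 where "M0 = nat \<lceil>N * (?H + 1 + \<delta>) / 2\<rceil>"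
  define M where "M = (LEAST M. 1 \<le> M \<and> code_exists D p N M eps)"
  have pos: "0 < N * (?H + 1 + \<delta>)"
    using N \<delta> shannon_nonneg[OF p_nonneg p_sum] by (intro mult_pos_pos) auto
  have M0_lower: "N * (?H + 1 + \<delta>) \<le> 2 * real M0" and M0_upper: "2 * real M0 \<le> N * (?H + 1 + \<delta>) + 2"
    using pos unfolding M0_def by linarith+
  have M0: "1 \<le> M0 \<and> code_exists D p N M0 eps"
    using M0_lower pos N \<delta> eps small
    by (auto intro: code_exists_if_length_ge)
  then have "M \<le> M0"
    unfolding M_def by (simp add: Least_le)
  with M0_upper have upper: "2 * real M \<le> N * (?H + 1 + \<delta>) + 2"
    by linarith
  have M: "1 \<le> M \<and> code_exists D p N M eps"
    unfolding M_def using M0 by (rule LeastI)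
  have "varentropy D p / (N * \<delta>\<^sup>2) \<le> 1 / 4"
    using small eps by linarith
  then have "N * (?H + 1 - \<delta>) - 2 < 2 * real M"
    using M N \<delta> eps by (intro code_exists_imp_length_gt) auto
  moreover have "\<bar>m - a / 2\<bar> \<le> b / 2 + 1" if "a - b - 2 < 2 * m" "2 * m \<le> a + b + 2" for m a b :: real
    using that by linarith
  ultimately have "\<bar>M - N * (?H + 1) / 2\<bar> \<le> N * \<delta> / 2 + 1"
    using upper by (simp add: algebra_simps)
  moreover have "rate D p N eps - (?H + 1) / 2 = (M - N * (?H + 1) / 2) / N"
    using N by (simp add: rate_def M_def field_simps)
  ultimately show ?thesis
    using N by (simp add: divide_le_eq add_divide_distrib algebra_simps)
qed

lemma rate_tendsto:
  assumes "0 < eps" "eps \<le> 1 / 2"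
  shows "(\<lambda>N. rate D p N eps) \<longlonglongrightarrow> (shannon D p + 1) / 2"
  unfolding tendsto_iff
proof (intro allI impI)
  fix r :: real assume r: "0 < r"
  have "eventually (\<lambda>N. varentropy D p / (r / 2)\<^sup>2 / real N < eps / 4) sequentially"
    using assms by (intro order_tendstoD(2)[OF lim_const_over_n]) auto
  moreover have "eventually (\<lambda>N. 1 / real N < r / 2) sequentially"
    using r by (intro order_tendstoD(2)[OF lim_inverse_n']) auto
  ultimately show "eventually (\<lambda>N. dist (rate D p N eps) ((shannon D p + 1) / 2) < r) sequentially"
    using eventually_ge_at_top[of 1]
  proof eventually_elim
    case (elim N)
    then have "\<bar>rate D p N eps - (shannon D p + 1) / 2\<bar> \<le> r / 4 + 1 / N"
      using rate_near_entropy[of N "r / 2" eps] r assms by (simp add: field_simps)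
    then show ?case
      using elim by (simp add: dist_real_def)
  qed
qed

end

theorem theorem1:
  fixes D :: nat and p :: "nat \<Rightarrow> real"
  assumes "2 \<le> D" and "\<forall>i<D. 0 \<le> p i" and "(\<Sum>i<D. p i) = 1"
  shows "((\<lambda>eps. limsup (\<lambda>N. ereal (rate D p N eps)))
            \<longlongrightarrow> ereal ((shannon D p + 1) / 2)) (at_right 0)"
proof (rule tendsto_eventually)
  have "\<forall>\<^sub>F eps in at_right 0. eps \<in> {0<..<1 / 2 :: real}"
    by (rule eventually_at_right_real) simp
  then show "\<forall>\<^sub>F eps in at_right 0. limsup (\<lambda>N. ereal (rate D p N eps)) = ereal ((shannon D p + 1) / 2)"
  proof eventually_elim
    case (elim eps)
    then show ?case
      using rate_tendsto[OF assms(2,3), of eps] by (intro lim_imp_Limsup) auto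
  qed
qed

end
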